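(* Let $X$ be a Banach space as described in the context, let $f\in X$, and assume $\mu_1:=\liminf_{n\to\infty}\|z^n\|^{1/n}>0$. If $f$ is (the restriction to $\mathbb{D}$ of) an entire function, then $$\lim_{n\to\infty}\left\{\frac{E_n(f)}{\|z^n\|}\right\}^{1/n}=0.$$ Conversely, if this limit relation holds, then the sequence $(p_n^* )$ of polynomials of best approximation of $f$ in the norm of $X$ converges uniformly in each disk $|z|<r$, $r\in(0,\mu_1)$, to some entire function.
   Context: $\mathbb{D}=\{z\in\mathbb{C}:|z|<1\}$. Here $X$ is a complex Banach space of functions defined in $\mathbb{D}$ (not necessarily analytic) whose norm $\|\cdot\|$ satisfies: (i) $\|f(\cdot\, e^{it})\|=\|f(\cdot)\|$ for all $t\in\mathbb{R}$ and $f\in X$; (ii) $\|f\|<\infty$ for every entire function $f$ (so $X$ contains all entire functions); (iii) for all $f\in X$ and $g\in L[0,2\pi]$, $\big\|\frac{1}{2\pi}\int_0^{2\pi} f(ze^{it})g(t)\,dt\big\|\le \frac{1}{2\pi}\int_0^{2\pi}|g(t)|\,dt\cdot\|f\|$. For $n\ge 1$, $\mathcal{P}_n$ is the set of complex polynomials of degree at most $n-1$, $E_n(f)=\inf_{p\in\mathcal{P}_n}\|f-p\|$, $p_n^*\in\mathcal{P}_n$ is a polynomial with $\|f-p_n^*\|=E_n(f)$, and $\|z^n\|$ is the norm in $X$ of the monomial $z\mapsto z^n$. *)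

theory Defs
  imports "HOL-Analysis.Analysis"
begin

text \<open>Elements of X are functions on the unit disk; we represent them canonically as
  functions complex \<Rightarrow> complex vanishing outside the open unit disk.\<close>

definition restr :: "(complex \<Rightarrow> complex) \<Rightarrow> complex \<Rightarrow> complex" where
  "restr g = (\<lambda>z. if z \<in> ball 0 1 then g z else 0)"

definition mono_fn :: "nat \<Rightarrow> complex \<Rightarrow> complex" where
  "mono_fn n = restr (\<lambda>z. z ^ n)"

definition admissible_space :: "(complex \<Rightarrow> complex) set \<Rightarrow> ((complex \<Rightarrow> complex) \<Rightarrow> real) \<Rightarrow> bool" where
  "admissible_space X N \<longleftrightarrow>
     (\<forall>f\<in>X. \<forall>z. z \<notin> ball 0 1 \<longrightarrow> f z = 0) \<and>
     (\<lambda>z. 0) \<in> X \<and>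
     (\<forall>f\<in>X. \<forall>g\<in>X. (\<lambda>z. f z + g z) \<in> X) \<and>
     (\<forall>f\<in>X. \<forall>c. (\<lambda>z. c * f z) \<in> X) \<and>
     (\<forall>f\<in>X. N f = 0 \<longleftrightarrow> f = (\<lambda>z. 0)) \<and>
     (\<forall>f\<in>X. \<forall>g\<in>X. N (\<lambda>z. f z + g z) \<le> N f + N g) \<and>
     (\<forall>f\<in>X. \<forall>c. N (\<lambda>z. c * f z) = cmod c * N f) \<and>
     (\<forall>s. (\<forall>n. s n \<in> X) \<longrightarrow>
          (\<forall>e>0. \<exists>M. \<forall>m\<ge>M. \<forall>n\<ge>M. N (\<lambda>z. s m z - s n z) < e) \<longrightarrow>
          (\<exists>f\<in>X. (\<lambda>n. N (\<lambda>z. s n z - f z)) \<longlonglongrightarrow> 0)) \<and>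
     \<comment> \<open>(i) rotation invariance\<close>
     (\<forall>f\<in>X. \<forall>t::real. (\<lambda>z. f (z * cis t)) \<in> X \<and> N (\<lambda>z. f (z * cis t)) = N f) \<and>
     \<comment> \<open>(ii) X contains all entire functions\<close>
     (\<forall>g. g holomorphic_on UNIV \<longrightarrow> restr g \<in> X) \<and>
     \<comment> \<open>(iii) convolution inequality\<close>
     (\<forall>f\<in>X. \<forall>g::real \<Rightarrow> complex. set_integrable lborel {0..2*pi} g \<longrightarrow>
        (\<lambda>z. (1 / (2*pi)) * (LINT t:{0..2*pi}|lborel. f (z * cis t) * g t)) \<in> X \<and>
        N (\<lambda>z. (1 / (2*pi)) * (LINT t:{0..2*pi}|lborel. f (z * cis t) * g t))
          \<le> (1 / (2*pi)) * (LINT t:{0..2*pi}|lborel. cmod (g t)) * N f)"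

definition poly_space :: "nat \<Rightarrow> (complex \<Rightarrow> complex) set" where
  "poly_space n = {restr (poly q) | q :: complex poly. degree q < n}"

definition best_approx_error ::
  "((complex \<Rightarrow> complex) \<Rightarrow> real) \<Rightarrow> nat \<Rightarrow> (complex \<Rightarrow> complex) \<Rightarrow> real" where
  "best_approx_error N n f = (INF p \<in> poly_space n. N (\<lambda>z. f z - p z))"

definition entire_on_disk :: "(complex \<Rightarrow> complex) \<Rightarrow> bool" where
  "entire_on_disk f \<longleftrightarrow> (\<exists>g. g holomorphic_on UNIV \<and> (\<forall>z\<in>ball 0 1. f z = g z))"

end

theory Submission
  imports Defs "HOL-Complex_Analysis.Complex_Analysis"
begin

text \<open>
  Write E(n) for E_n(f) and w(k) for the norm of z^k. Convolving over circles with a kernel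
  in t, as allowed by condition (iii), costs at most the L^1 norm of the kernel. The kernel
  exp(-ikt) turns an entire h into c_k z^k, c_k its k-th Taylor coefficient, so
  |c_k| w(k) is at most the norm of h. The kernel (\<rho> exp(-it))^n exp(it) / (exp(it) - \<rho>),
  applied to f(z/\<rho>) for entire f, returns f minus its Taylor polynomial of degree n - 1,
  whence E(n) \<le> C(\<rho>) \<rho>^n for every \<rho> < 1; since w(n) \<ge> m^n for some m > 0, the n-th root
  of E(n) / w(n) tends to 0.

  Conversely, the coefficient bound applied to entire functions with slowly decaying
  coefficients gives w(n) \<le> B^n, so E(n) decays faster than any geometric sequence.
  Applied to p(n+1) - p(n) it bounds the change of the k-th coefficient by
  (E(n) + E(n+1)) / w(k). The coefficients therefore converge to those of an entire F, and
  on |z| < r the error is at most a tail sum of the E(j) times the sum of r^k / w(k), which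
  is finite for r below the lower growth rate of w.
\<close>

section \<open>Integrals over circles\<close>

lemma has_integral_unit_circle_Cauchy:
  fixes h :: "complex \<Rightarrow> complex" and a :: complex
  assumes hol: "h holomorphic_on UNIV" and a: "cmod a < 1"
  shows "((\<lambda>t. h (cis t) * cis t / (cis t - a) ^ Suc k) has_integral
           2 * pi * ((deriv ^^ k) h a / fact k)) {0..2*pi}"
proof -
  define G where "G = (\<lambda>t. h (cis t) * cis t / (cis t - a) ^ Suc k)"
  have "((\<lambda>u. h u / (u - a) ^ Suc k) has_contour_integral (2 * pi * \<i> / fact k * (deriv ^^ k) h a))
          (circlepath 0 1)"
    by (rule Cauchy_has_contour_integral_higher_derivative_circlepath)
       (use a holomorphic_on_subset[OF hol] continuous_on_subset[OF holomorphic_on_imp_continuous_on[OF hol]]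
         in auto)
  hence H: "((\<lambda>x. h (circlepath 0 1 x) / (circlepath 0 1 x - a) ^ Suc k *
                vector_derivative (circlepath 0 1) (at x within {0..1}))
           has_integral (2 * pi * \<i> / fact k * (deriv ^^ k) h a)) {0..1}"
    by (simp add: has_contour_integral_def)
  have "((\<lambda>x. (2 * pi * \<i>) * G (2 * pi * x)) has_integral (2 * pi * \<i> / fact k * (deriv ^^ k) h a)) {0..1}"
  proof (rule has_integral_spike_finite[OF finite.emptyI _ H])
    fix x :: real assume "x \<in> {0..1} - {}"
    hence "vector_derivative (circlepath 0 1) (at x within {0..1}) = 2 * pi * \<i> * cis (2 * pi * x)"
      by (simp add: vector_derivative_circlepath01 cis_conv_exp mult_ac)
    moreover have "circlepath 0 1 x = cis (2 * pi * x)"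
      by (simp add: circlepath cis_conv_exp mult_ac)
    ultimately show "(2 * pi * \<i>) * G (2 * pi * x) = h (circlepath 0 1 x) / (circlepath 0 1 x - a) ^ Suc k *
                vector_derivative (circlepath 0 1) (at x within {0..1})"
      by (simp add: G_def)
  qed
  hence "((\<lambda>x. G (2 * pi * x)) has_integral (deriv ^^ k) h a / fact k) {0..1}"
    by (subst (asm) has_integral_mult_right_iff) auto
  hence "(G has_integral (2 * pi) *\<^sub>R ((deriv ^^ k) h a / fact k)) {0..2*pi}"
    using has_integral_stretch_real_iff[of "2*pi" G _ 0 "2*pi"] by simp
  thus ?thesis by (simp add: G_def scaleR_conv_of_real)
qed

lemma holomorphic_on_compose_scale:
  fixes g :: "complex \<Rightarrow> complex"
  assumes "g holomorphic_on UNIV"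
  shows "(\<lambda>u. g (w * u)) holomorphic_on UNIV"
proof -
  have "(g \<circ> (\<lambda>u. w * u)) holomorphic_on UNIV"
    by (rule holomorphic_on_compose) (auto intro: holomorphic_intros holomorphic_on_subset[OF assms])
  thus ?thesis by (simp add: o_def)
qed

lemma continuous_on_entire_circle:
  fixes g :: "complex \<Rightarrow> complex"
  assumes "g holomorphic_on UNIV"
  shows "continuous_on A (\<lambda>t::real. g (w * cis t))"
  by (intro continuous_on_compose2[OF holomorphic_on_imp_continuous_on[OF assms]] continuous_intros)
     auto

lemma has_integral_circle_Taylor_coeff:
  fixes g :: "complex \<Rightarrow> complex"
  assumes hol: "g holomorphic_on UNIV"
  shows "((\<lambda>t. g (w * cis t) * cis (- (real k * t))) has_integral
           2 * pi * ((deriv ^^ k) g 0 / fact k * w ^ k)) {0..2*pi}"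
proof -
  have "cis t / (cis t - 0) ^ Suc k = cis (- (real k * t))" for t
    by (simp only: diff_zero Complex.DeMoivre cis_divide) (simp add: algebra_simps)
  hence integrand: "(\<lambda>t. g (w * cis t) * cis t / (cis t - 0) ^ Suc k)
                      = (\<lambda>t. g (w * cis t) * cis (- (real k * t)))"
    by (simp add: times_divide_eq_right[symmetric])
  have "(deriv ^^ k) (\<lambda>u. g (w * u)) 0 = w ^ k * (deriv ^^ k) g 0"
    using higher_deriv_compose_linear[OF hol, of UNIV 0 w k] by simp
  thus ?thesis
    using has_integral_unit_circle_Cauchy[OF holomorphic_on_compose_scale[OF hol, of w], of 0 k]
    unfolding integrand by (simp add: mult_ac)
qed

lemma has_integral_circle_Cauchy_kernel:
  fixes g :: "complex \<Rightarrow> complex"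
  assumes hol: "g holomorphic_on UNIV" and a: "cmod a < 1"
  shows "((\<lambda>t. g (w * cis t) * (cis t / (cis t - a))) has_integral 2 * pi * g (w * a)) {0..2*pi}"
  using has_integral_unit_circle_Cauchy[OF holomorphic_on_compose_scale[OF hol, of w] a, of 0]
  by (simp add: mult.assoc)

lemma cis_kernel_geometric:
  fixes a :: complex
  assumes "cis t \<noteq> a"
  shows "(a * cis (- t)) ^ n * (cis t / (cis t - a))
           = cis t / (cis t - a) - (\<Sum>k<n. a ^ k * cis (- (real k * t)))"
proof -
  define x where "x = a * cis (- t)"
  have "cis t * (1 - x) = cis t - a"
    by (simp add: x_def algebra_simps cis_mult)
  hence x: "x \<noteq> 1" and kernel: "cis t / (cis t - a) = 1 / (1 - x)"
    using assms by (auto simp: field_simps)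
  have "(\<Sum>k<n. a ^ k * cis (- (real k * t))) = (\<Sum>k<n. x ^ k)"
    by (simp add: x_def power_mult_distrib Complex.DeMoivre)
  thus ?thesis
    unfolding kernel x_def[symmetric] sum_gp_strict using x by (simp add: field_simps)
qed

lemma has_integral_circle_Taylor_remainder:
  fixes g :: "complex \<Rightarrow> complex"
  assumes hol: "g holomorphic_on UNIV" and a: "cmod a < 1"
  shows "((\<lambda>t. g (w * cis t) * ((a * cis (- t)) ^ n * (cis t / (cis t - a)))) has_integral
           2 * pi * (g (w * a) - (\<Sum>k<n. (deriv ^^ k) g 0 / fact k * (w * a) ^ k))) {0..2*pi}"
proof -
  have ne: "cis t \<noteq> a" for t using a by auto
  have integrand: "g (w * cis t) * ((a * cis (- t)) ^ n * (cis t / (cis t - a)))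
      = g (w * cis t) * (cis t / (cis t - a)) - (\<Sum>k<n. a ^ k * (g (w * cis t) * cis (- (real k * t))))" for t
    by (subst cis_kernel_geometric[OF ne]) (simp add: right_diff_distrib sum_distrib_left mult.left_commute)
  have "((\<lambda>t. g (w * cis t) * (cis t / (cis t - a)) - (\<Sum>k<n. a ^ k * (g (w * cis t) * cis (- (real k * t)))))
         has_integral 2 * pi * g (w * a) - (\<Sum>k<n. a ^ k * (2 * pi * ((deriv ^^ k) g 0 / fact k * w ^ k))))
         {0..2*pi}"
    by (intro has_integral_diff has_integral_sum has_integral_mult_right
          has_integral_circle_Cauchy_kernel[OF hol a] has_integral_circle_Taylor_coeff[OF hol]) auto
  thus ?thesis
    unfolding integrand by (simp add: sum_distrib_left right_diff_distrib power_mult_distrib mult_ac)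
qed

lemma norm_cis_div_cis_minus_le:
  fixes a :: complex
  assumes "cmod a < 1"
  shows "cmod (cis t / (cis t - a)) \<le> 1 / (1 - cmod a)"
proof -
  have "1 - cmod a \<le> cmod (cis t - a)"
    using norm_triangle_ineq2[of "cis t" a] by simp
  thus ?thesis
    using assms by (auto simp: norm_divide intro!: frac_le)
qed

lemma integral_norm_Taylor_kernel_le:
  assumes \<rho>: "0 < \<rho>" "\<rho> < 1"
  shows "integral {0..2*pi} (\<lambda>t. cmod ((complex_of_real \<rho> * cis (- t)) ^ n *
           (cis t / (cis t - complex_of_real \<rho>)))) / (2 * pi) \<le> \<rho> ^ n / (1 - \<rho>)"
proof -
  define a where "a = complex_of_real \<rho>"
  have a: "cmod a < 1" "cmod a = \<rho>" using \<rho> by (simp_all add: a_def)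
  define \<kappa> where "\<kappa> t = (a * cis (- t)) ^ n * (cis t / (cis t - a))" for t
  have \<kappa>_cont: "continuous_on {0..2*pi} \<kappa>"
    unfolding \<kappa>_def by (intro continuous_intros) (use a in auto)
  have "integral {0..2*pi} (\<lambda>t. cmod (\<kappa> t)) \<le> integral {0..2*pi} (\<lambda>t. \<rho> ^ n / (1 - \<rho>))"
  proof (rule integral_le)
    show "(\<lambda>t. cmod (\<kappa> t)) integrable_on {0..2*pi}"
      by (intro integrable_continuous_interval continuous_intros \<kappa>_cont)
    fix t
    have "cmod (\<kappa> t) = \<rho> ^ n * cmod (cis t / (cis t - a))"
      unfolding \<kappa>_def norm_mult norm_power using a(2) by simp
    thus "cmod (\<kappa> t) \<le> \<rho> ^ n / (1 - \<rho>)"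
      using mult_left_mono[OF norm_cis_div_cis_minus_le[OF a(1), of t], of "\<rho> ^ n"] \<rho> a(2) by simp
  qed (rule integrable_const_ivl)
  hence "integral {0..2*pi} (\<lambda>t. cmod (\<kappa> t)) \<le> (\<rho> ^ n / (1 - \<rho>)) * (2 * pi)"
    by (simp add: mult.commute)
  hence "integral {0..2*pi} (\<lambda>t. cmod (\<kappa> t)) / (2 * pi) \<le> \<rho> ^ n / (1 - \<rho>)"
    by (simp add: pos_divide_le_eq)
  thus ?thesis by (simp add: \<kappa>_def a_def)
qed

definition circle_conv :: "(complex \<Rightarrow> complex) \<Rightarrow> (real \<Rightarrow> complex) \<Rightarrow> complex \<Rightarrow> complex" where
  "circle_conv F \<kappa> =
     (\<lambda>z. complex_of_real (1 / (2*pi)) * (LINT t:{0..2*pi}|lborel. F (z * cis t) * \<kappa> t))"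

lemma circle_conv_restr:
  fixes h :: "complex \<Rightarrow> complex"
  assumes hol: "h holomorphic_on UNIV" and \<kappa>: "continuous_on {0..2*pi} \<kappa>"
    and I: "\<And>z. ((\<lambda>t. h (z * cis t) * \<kappa> t) has_integral I z) {0..2*pi}"
  shows "circle_conv (restr h) \<kappa> = restr (\<lambda>z. I z / (2 * pi))"
proof
  fix z :: complex
  show "circle_conv (restr h) \<kappa> z = restr (\<lambda>z. I z / (2 * pi)) z"
  proof (cases "z \<in> ball 0 1")
    case True
    hence "(\<lambda>t. restr h (z * cis t) * \<kappa> t) = (\<lambda>t. h (z * cis t) * \<kappa> t)"
      by (auto simp: restr_def norm_mult)
    moreover have "set_integrable lborel {0..2*pi} (\<lambda>t. h (z * cis t) * \<kappa> t)"
      by (intro borel_integrable_atLeastAtMost' continuous_intros continuous_on_entire_circle[OF hol] \<kappa>)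
    hence "(LINT t:{0..2*pi}|lborel. h (z * cis t) * \<kappa> t) = I z"
      using set_borel_integral_eq_integral(2) integral_unique[OF I] by metis
    ultimately show ?thesis
      using True by (simp add: circle_conv_def restr_def)
  next
    case False
    hence "(\<lambda>t. restr h (z * cis t) * \<kappa> t) = (\<lambda>t. 0)"
      by (auto simp: restr_def norm_mult)
    thus ?thesis using False by (simp add: circle_conv_def restr_def)
  qed
qed

lemma entire_eval_fps_Abs_fps:
  fixes c :: "nat \<Rightarrow> complex"
  assumes "conv_radius c = \<infinity>"
  shows "eval_fps (Abs_fps c) holomorphic_on UNIV"
    and "(deriv ^^ n) (eval_fps (Abs_fps c)) 0 / fact n = c n"
    and "(\<lambda>n. c n * z ^ n) sums eval_fps (Abs_fps c) z"
proof -
  have r: "fps_conv_radius (Abs_fps c) = \<infinity>" using assms by (simp add: fps_conv_radius_def)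
  show "eval_fps (Abs_fps c) holomorphic_on UNIV"
    by (rule holomorphic_on_eval_fps) (simp add: r)
  show "(deriv ^^ n) (eval_fps (Abs_fps c)) 0 / fact n = c n"
    using fps_nth_conv_deriv[of "Abs_fps c" n] r by simp
  show "(\<lambda>n. c n * z ^ n) sums eval_fps (Abs_fps c) z"
    using sums_eval_fps[of z "Abs_fps c"] r by simp
qed

lemma higher_deriv_poly_0: "(deriv ^^ k) (poly q) 0 / fact k = coeff (q :: complex poly) k"
proof -
  have "eval_fps (fps_of_poly q) = poly q" by (rule ext) simp
  thus ?thesis
    using fps_nth_conv_deriv[of "fps_of_poly q" k] by simp
qed

section \<open>Superexponential decay\<close>

definition superexp_decay :: "(nat \<Rightarrow> real) \<Rightarrow> bool" where
  "superexp_decay a \<longleftrightarrow> (\<forall>x>0. eventually (\<lambda>n. a n \<le> x ^ n) sequentially)"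

lemma superexp_decayI:
  assumes "\<And>x. x > 0 \<Longrightarrow> \<exists>C. eventually (\<lambda>n. a n \<le> C * x ^ n) sequentially"
  shows "superexp_decay a"
  unfolding superexp_decay_def
proof (intro allI impI)
  fix x :: real assume x: "x > 0"
  obtain C where C: "eventually (\<lambda>n. a n \<le> C * (x/2) ^ n) sequentially"
    using assms[of "x/2"] x by auto
  have "eventually (\<lambda>n. C \<le> 2 ^ n) sequentially"
    using filterlim_realpow_sequentially_gt1[of "2::real"]
    by (auto simp: filterlim_at_infinity_conv_norm_at_top filterlim_at_top)
  with C show "eventually (\<lambda>n. a n \<le> x ^ n) sequentially"
  proof eventually_elim
    case (elim n)
    have "C * (x/2) ^ n \<le> 2 ^ n * (x/2) ^ n"
      by (rule mult_right_mono) (use elim x in auto)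
    thus ?case using elim by (simp add: power_divide)
  qed
qed

lemma power_powr_inverse: "0 \<le> a \<Longrightarrow> 0 < n \<Longrightarrow> (a powr (1 / real n)) ^ n = a"
  by (simp add: root_powr_inverse[symmetric])

lemma superexp_decay_iff_root_tendsto_0:
  assumes nonneg: "eventually (\<lambda>n. 0 \<le> a n) sequentially"
  shows "superexp_decay a \<longleftrightarrow> (\<lambda>n. a n powr (1 / real n)) \<longlonglongrightarrow> 0"
proof
  assume a: "superexp_decay a"
  show "(\<lambda>n. a n powr (1 / real n)) \<longlonglongrightarrow> 0"
  proof (rule order_tendstoI)
    fix y :: real assume "y < 0"
    thus "eventually (\<lambda>n. y < a n powr (1 / real n)) sequentially"
      by (intro always_eventually allI) (metis powr_ge_zero less_le_trans)
  next
    fix y :: real assume y: "0 < y"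
    have "eventually (\<lambda>n. a n \<le> (y/2) ^ n) sequentially"
      using a y by (simp add: superexp_decay_def)
    with nonneg eventually_gt_at_top[of 0]
    show "eventually (\<lambda>n. a n powr (1 / real n) < y) sequentially"
    proof eventually_elim
      case (elim n)
      have "a n powr (1 / real n) \<le> ((y/2) ^ n) powr (1 / real n)"
        by (rule powr_mono2) (use elim in auto)
      also have "\<dots> = y/2"
        using elim y by (simp add: powr_realpow[symmetric] powr_powr)
      finally show ?case using y by simp
    qed
  qed
next
  assume lim: "(\<lambda>n. a n powr (1 / real n)) \<longlonglongrightarrow> 0"
  show "superexp_decay a"
    unfolding superexp_decay_def
  proof (intro allI impI)
    fix x :: real assume "x > 0"
    hence "eventually (\<lambda>n. a n powr (1 / real n) < x) sequentially"
      using lim by (intro order_tendstoD) auto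
    with nonneg eventually_gt_at_top[of 0]
    show "eventually (\<lambda>n. a n \<le> x ^ n) sequentially"
    proof eventually_elim
      case (elim n)
      hence "(a n powr (1 / real n)) ^ n \<le> x ^ n"
        by (intro power_mono) auto
      thus ?case using elim by (simp add: power_powr_inverse)
    qed
  qed
qed

lemma superexp_decay_LIMSEQ_0:
  assumes "\<And>n. 0 \<le> a n" and "superexp_decay a"
  shows "a \<longlonglongrightarrow> 0"
proof -
  have "eventually (\<lambda>n. a n \<le> (1/2) ^ n) sequentially"
    using assms(2) by (simp add: superexp_decay_def)
  thus ?thesis
    by (intro tendsto_sandwich[OF _ _ tendsto_const LIMSEQ_power_zero[of "1/2::real"]])
       (auto simp: assms(1))
qed

lemma superexp_decay_shift_sum:
  assumes "superexp_decay E"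
  shows "superexp_decay (\<lambda>n. E (Suc n) + E (Suc (Suc n)))"
proof (rule superexp_decayI)
  fix x :: real assume x: "0 < x"
  have "eventually (\<lambda>n. E n \<le> x ^ n) sequentially"
    using assms x by (simp add: superexp_decay_def)
  hence E1: "eventually (\<lambda>n. E (Suc n) \<le> x ^ Suc n) sequentially"
    using eventually_sequentially_Suc[of "\<lambda>n. E n \<le> x ^ n"] by blast
  hence "eventually (\<lambda>n. E (Suc (Suc n)) \<le> x ^ Suc (Suc n)) sequentially"
    using eventually_sequentially_Suc[of "\<lambda>n. E (Suc n) \<le> x ^ Suc n"] by blast
  with E1 have "eventually (\<lambda>n. E (Suc n) + E (Suc (Suc n)) \<le> (x + x\<^sup>2) * x ^ n) sequentially"
    by eventually_elim (simp add: algebra_simps power2_eq_square)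
  thus "\<exists>C. eventually (\<lambda>n. E (Suc n) + E (Suc (Suc n)) \<le> C * x ^ n) sequentially" ..
qed

lemma superexp_decay_tail:
  assumes nonneg: "\<And>n. 0 \<le> e n" and e: "superexp_decay e"
  shows "summable e" "superexp_decay (\<lambda>n. \<Sum>i. e (i + n))"
proof -
  have ev: "eventually (\<lambda>n. e n \<le> (1/2) ^ n) sequentially"
    using e by (simp add: superexp_decay_def)
  show sum: "summable e"
    by (rule summable_comparison_test_ev[OF _ summable_geometric[of "1/2::real"]])
       (use ev nonneg in \<open>auto elim: eventually_mono\<close>)
  show "superexp_decay (\<lambda>n. \<Sum>i. e (i + n))"
  proof (rule superexp_decayI)
    fix x :: real assume x: "x > 0"
    define \<delta> where "\<delta> = min x (1/2)"
    have \<delta>: "0 < \<delta>" "\<delta> \<le> x" "\<delta> \<le> 1/2" using x by (auto simp: \<delta>_def)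
    obtain n0 where n0: "\<And>j. j \<ge> n0 \<Longrightarrow> e j \<le> \<delta> ^ j"
      using e \<delta>(1) unfolding superexp_decay_def eventually_at_top_linorder by blast
    have "(\<Sum>i. e (i + n)) \<le> 2 * x ^ n" if n: "n \<ge> n0" for n
    proof -
      have geom: "summable (\<lambda>i. \<delta> ^ n * \<delta> ^ i)"
        by (intro summable_mult summable_geometric) (use \<delta> in auto)
      have "(\<Sum>i. e (i + n)) \<le> (\<Sum>i. \<delta> ^ n * \<delta> ^ i)"
      proof (rule suminf_le[OF _ summable_ignore_initial_segment[OF sum] geom])
        fix i show "e (i + n) \<le> \<delta> ^ n * \<delta> ^ i"
          using n0[of "i + n"] n by (simp add: power_add mult.commute)
      qed
      also have "\<dots> = \<delta> ^ n / (1 - \<delta>)"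
        using suminf_geometric[of \<delta>] \<delta> by (simp add: suminf_mult)
      also have "\<dots> \<le> \<delta> ^ n / (1/2)"
        by (rule divide_left_mono) (use \<delta> in auto)
      also have "\<dots> \<le> 2 * x ^ n"
        using power_mono[OF \<delta>(2), of n] \<delta> by simp
      finally show ?thesis .
    qed
    thus "\<exists>C. eventually (\<lambda>n. (\<Sum>i. e (i + n)) \<le> C * x ^ n) sequentially"
      unfolding eventually_at_top_linorder by blast
  qed
qed

lemma conv_radius_eq_inf_if_superexp_decay:
  fixes c :: "nat \<Rightarrow> complex"
  assumes "superexp_decay (\<lambda>k. cmod (c k))"
  shows "conv_radius c = \<infinity>"
proof (rule conv_radius_inftyI'')
  fix z :: complex
  define r where "r = cmod z + 1"
  have r: "r > 0" by (simp add: r_def add_nonneg_pos)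
  hence "eventually (\<lambda>k. cmod (c k) \<le> (1 / (2 * r)) ^ k) sequentially"
    using assms unfolding superexp_decay_def by simp
  hence "eventually (\<lambda>k. norm (c k * z ^ k) \<le> (1/2) ^ k) sequentially"
  proof eventually_elim
    case (elim k)
    have "norm (c k * z ^ k) \<le> (1 / (2 * r)) ^ k * r ^ k"
      unfolding norm_mult norm_power by (intro mult_mono elim power_mono) (auto simp: r_def)
    also have "\<dots> = (1/2) ^ k"
      using r by (simp add: power_mult_distrib[symmetric])
    finally show ?case .
  qed
  thus "summable (\<lambda>k. c k * z ^ k)"
    by (rule summable_comparison_test_ev) (simp add: summable_geometric)
qed

lemma eventually_power_less_if_less_liminf_root:
  fixes a :: "nat \<Rightarrow> real"
  assumes lim: "ereal m < liminf (\<lambda>n. ereal (a n powr (1 / real n)))"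
    and m: "0 \<le> m" and a: "\<And>n. 0 \<le> a n"
  shows "eventually (\<lambda>n. m ^ n < a n) sequentially"
  using less_LiminfD[OF lim] eventually_gt_at_top[of 0]
proof eventually_elim
  case (elim n)
  hence "m ^ n < (a n powr (1 / real n)) ^ n"
    by (intro power_strict_mono) (use m in auto)
  thus ?case using elim a by (simp add: power_powr_inverse)
qed

section \<open>A geometric growth bound\<close>

lemma superexp_decay_inverse_sqrt_power:
  fixes T :: "nat \<Rightarrow> real"
  assumes large: "\<And>y. eventually (\<lambda>k. y < T k) sequentially" and ge_1: "\<And>k. 1 \<le> T k"
  shows "superexp_decay (\<lambda>k. (1 / sqrt (T k)) ^ k)"
  unfolding superexp_decay_def
proof (intro allI impI)
  fix x :: real assume x: "0 < x"
  show "eventually (\<lambda>k. (1 / sqrt (T k)) ^ k \<le> x ^ k) sequentially"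
    using large[of "1 / x\<^sup>2"]
  proof eventually_elim
    case (elim k)
    hence "1 / x \<le> sqrt (T k)"
      using x by (metis real_sqrt_abs real_sqrt_le_mono less_imp_le abs_of_pos
                        power_one_over zero_less_divide_1_iff)
    hence "1 / sqrt (T k) \<le> x"
      using x ge_1[of k] by (simp add: divide_simps mult.commute)
    thus ?case by (intro power_mono) (use ge_1[of k] in auto)
  qed
qed

definition running_max :: "(nat \<Rightarrow> real) \<Rightarrow> nat \<Rightarrow> real" where
  "running_max M n = Max (insert 1 (M ` {1..n}))"

lemma running_max_ge: "1 \<le> k \<Longrightarrow> k \<le> n \<Longrightarrow> M k \<le> running_max M n"
  unfolding running_max_def by (rule Max_ge) auto

lemma running_max_ge_1: "1 \<le> running_max M n"
  unfolding running_max_def by (rule Max_ge) auto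

lemma running_max_mono: "n \<le> n' \<Longrightarrow> running_max M n \<le> running_max M n'"
  unfolding running_max_def by (rule Max_mono) auto

lemma running_max_attained:
  assumes "1 < running_max M n"
  obtains k where "1 \<le> k" "k \<le> n" "M k = running_max M n" "running_max M k = running_max M n"
proof -
  have "running_max M n \<in> M ` {1..n}"
    using assms Max_in[of "insert 1 (M ` {1..n})"] by (auto simp: running_max_def)
  then obtain k where k: "1 \<le> k" "k \<le> n" "M k = running_max M n" by auto
  moreover have "running_max M k = running_max M n"
    by (rule order_antisym[OF running_max_mono[OF k(2)]]) (use running_max_ge[of k k M] k in simp)
  ultimately show ?thesis using that by blast
qed

lemma running_max_eventually_gt:
  assumes "\<not> bdd_above (range (running_max M))"
  shows "eventually (\<lambda>n. y < running_max M n) sequentially"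
proof -
  obtain n0 where "y < running_max M n0" using assms by (auto simp: bdd_above_def not_le)
  thus ?thesis unfolding eventually_at_top_linorder
    by (intro exI[of _ n0] allI impI) (meson running_max_mono less_le_trans)
qed

lemma geometric_bound_if_entire_coeffs_bounded:
  fixes w :: "nat \<Rightarrow> real"
  assumes w: "\<And>k. 0 < w k"
    and bounded: "\<And>c :: nat \<Rightarrow> complex. conv_radius c = \<infinity> \<Longrightarrow> \<exists>H. \<forall>k. cmod (c k) * w k \<le> H"
  shows "\<exists>B>0. \<forall>n\<ge>1. w n \<le> B ^ n"
proof -
  define M where "M k = w k powr (1 / real k)" for k
  define T where "T = running_max M"
  have w_eq: "w k = M k ^ k" if "1 \<le> k" for k
    using w[of k] that by (simp add: M_def power_powr_inverse)
  show ?thesis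
  proof (cases "bdd_above (range T)")
    case True
    then obtain B where B: "\<And>n. T n \<le> B" by (auto simp: bdd_above_def)
    have "0 < B" using running_max_ge_1[of M 0] B[of 0] by (simp add: T_def)
    moreover have "w n \<le> B ^ n" if "1 \<le> n" for n
      unfolding w_eq[OF that]
      by (rule power_mono) (use running_max_ge[of n n M] B[of n] that in \<open>auto simp: M_def T_def\<close>)
    ultimately show ?thesis by blast
  next
    case False
    hence T_large: "eventually (\<lambda>n. y < T n) sequentially" for y
      unfolding T_def by (rule running_max_eventually_gt)
    \<comment> \<open>c is entire since T \<longrightarrow> \<infinity>, but at an index k where T is attained by M we get
      |c k| w k = sqrt (T k) ^ k, which exceeds any bound H.\<close>
    define c where "c k = complex_of_real ((1 / sqrt (T k)) ^ k)" for k
    have c_norm: "cmod (c k) = (1 / sqrt (T k)) ^ k" for k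
      using running_max_ge_1[of M k] unfolding c_def norm_of_real T_def by simp
    have "superexp_decay (\<lambda>k. cmod (c k))"
      unfolding c_norm T_def by (rule superexp_decay_inverse_sqrt_power[OF T_large[unfolded T_def] running_max_ge_1])
    then obtain H where H: "\<And>k. cmod (c k) * w k \<le> H"
      using bounded conv_radius_eq_inf_if_superexp_decay by blast
    obtain n where n: "max 1 (H\<^sup>2) < T n"
      using T_large[of "max 1 (H\<^sup>2)"] unfolding eventually_at_top_linorder by blast
    hence "1 < running_max M n" by (simp add: T_def)
    then obtain k where k: "1 \<le> k" "k \<le> n" "M k = T n" "T k = T n"
      unfolding T_def by (rule running_max_attained)
    define \<tau> where "\<tau> = T n"
    have \<tau>: "1 < \<tau>" "H < sqrt \<tau>"
      using n by (auto simp: \<tau>_def real_less_rsqrt)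
    have "cmod (c k) * w k = (1 / sqrt \<tau>) ^ k * \<tau> ^ k"
      using k by (simp add: c_norm w_eq \<tau>_def)
    also have "\<dots> = sqrt \<tau> ^ k"
      using \<tau> by (simp add: power_mult_distrib[symmetric] real_div_sqrt)
    also have "\<dots> \<ge> sqrt \<tau>"
      using \<tau> k by (simp add: power_increasing[of 1 k "sqrt \<tau>", simplified])
    finally show ?thesis using H[of k] \<tau> by linarith
  qed
qed

section \<open>Entire limits of polynomial sequences\<close>

lemma convergent_with_tail_bound:
  fixes x :: "nat \<Rightarrow> 'a::banach"
  assumes step: "\<And>n. norm (x (Suc n) - x n) \<le> d n" and d: "summable d"
  shows "\<exists>L. x \<longlonglongrightarrow> L \<and> (\<forall>n. norm (L - x n) \<le> (\<Sum>i. d (i + n)))"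
proof -
  define D where "D j = x (Suc j) - x j" for j
  have norm_D: "summable (\<lambda>j. norm (D j))"
    by (rule summable_comparison_test[OF _ d]) (use step in \<open>auto simp: D_def\<close>)
  have D: "summable D" by (rule summable_norm_cancel[OF norm_D])
  have telescope: "x n - x 0 = (\<Sum>j<n. D j)" for n
    by (simp add: D_def sum_lessThan_telescope)
  define L where "L = x 0 + suminf D"
  have "(\<lambda>n. x n - x 0) \<longlonglongrightarrow> suminf D"
    unfolding telescope by (rule summable_LIMSEQ[OF D])
  hence "(\<lambda>n. (x n - x 0) + x 0) \<longlonglongrightarrow> suminf D + x 0"
    by (intro tendsto_add tendsto_const)
  hence "x \<longlonglongrightarrow> L" by (simp add: L_def add.commute)
  moreover have "norm (L - x n) \<le> (\<Sum>i. d (i + n))" for n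
  proof -
    have "L - x n = suminf D - (x n - x 0)" by (simp add: L_def)
    also have "\<dots> = (\<Sum>i. D (i + n))"
      unfolding telescope using suminf_split_initial_segment[OF D, of n] by simp
    also have "norm \<dots> \<le> (\<Sum>i. norm (D (i + n)))"
      by (rule summable_norm[OF summable_ignore_initial_segment[OF norm_D]])
    also have "\<dots> \<le> (\<Sum>i. d (i + n))"
      by (rule suminf_le[OF _ summable_ignore_initial_segment[OF norm_D]
                               summable_ignore_initial_segment[OF d]])
         (use step in \<open>simp add: D_def\<close>)
    finally show ?thesis .
  qed
  ultimately show ?thesis by blast
qed

lemma summable_power_div_if_eventually_power_le:
  fixes w :: "nat \<Rightarrow> real"
  assumes w: "\<And>k. 0 < w k" and r: "0 < r" "r < m" and m: "eventually (\<lambda>k. m ^ k \<le> w k) sequentially"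
  shows "summable (\<lambda>k. r ^ k / w k)"
proof (rule summable_comparison_test_ev[OF _ summable_geometric[of "r / m"]])
  show "eventually (\<lambda>k. norm (r ^ k / w k) \<le> (r / m) ^ k) sequentially"
    using m
  proof eventually_elim
    case (elim k)
    have "r ^ k / w k \<le> r ^ k / m ^ k"
      by (rule divide_left_mono) (use elim r w[of k] in auto)
    thus ?case using r w[of k] by (simp add: power_divide)
  qed
qed (use r in simp)

lemma coeff_limits_with_tail_bound:
  fixes p :: "nat \<Rightarrow> complex poly" and w e :: "nat \<Rightarrow> real"
  assumes w: "\<And>k. 0 < w k" and e: "summable e"
    and step: "\<And>n k. cmod (coeff (p (Suc n)) k - coeff (p n) k) * w k \<le> e n"
  obtains \<beta> where "\<And>k n. cmod (\<beta> k - coeff (p n) k) \<le> (\<Sum>i. e (i + n)) / w k"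
proof -
  have "\<forall>k. \<exists>b. \<forall>n. cmod (b - coeff (p n) k) \<le> (\<Sum>i. e (i + n)) / w k"
  proof
    fix k
    have "norm (coeff (p (Suc n)) k - coeff (p n) k) \<le> e n / w k" for n
      using step[of n k] w[of k] by (simp add: pos_le_divide_eq)
    then obtain b where "\<forall>n. cmod (b - coeff (p n) k) \<le> (\<Sum>i. e (i + n) / w k)"
      using convergent_with_tail_bound[OF _ summable_divide[OF e], of "\<lambda>n. coeff (p n) k"]
      by blast
    thus "\<exists>b. \<forall>n. cmod (b - coeff (p n) k) \<le> (\<Sum>i. e (i + n)) / w k"
      using suminf_divide[OF summable_ignore_initial_segment[OF e]] by auto
  qed
  with choice that show ?thesis by metis
qed

lemma superexp_decay_limit_coeffs:
  fixes p :: "nat \<Rightarrow> complex poly" and w t :: "nat \<Rightarrow> real"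
  assumes deg: "\<And>n. degree (p n) \<le> n" and \<beta>: "\<And>k n. cmod (\<beta> k - coeff (p n) k) \<le> t n / w k"
    and t: "\<And>n. 0 \<le> t n" "superexp_decay t"
    and w: "\<And>k. 0 < w k" and m: "0 < m" "eventually (\<lambda>k. m ^ k \<le> w k) sequentially"
  shows "superexp_decay (\<lambda>k. cmod (\<beta> k))"
proof (rule superexp_decayI)
  fix x :: real assume x: "0 < x"
  have "eventually (\<lambda>n. t n \<le> (x * m) ^ n) sequentially"
    using t(2) x m(1) by (simp add: superexp_decay_def)
  hence "eventually (\<lambda>n. cmod (\<beta> (Suc n)) \<le> 1 / (x * m) * x ^ Suc n) sequentially"
    using eventually_sequentially_Suc[of "\<lambda>k. m ^ k \<le> w k", THEN iffD2, OF m(2)]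
  proof eventually_elim
    case (elim n)
    have "cmod (\<beta> (Suc n)) \<le> t n / w (Suc n)"
      using \<beta>[of "Suc n" n] deg[of n] by (simp add: coeff_eq_0)
    also have "\<dots> \<le> (x * m) ^ n / m ^ Suc n"
      by (rule frac_le) (use elim m w t x in auto)
    also have "\<dots> = 1 / (x * m) * x ^ Suc n"
      using x m by (simp add: power_mult_distrib field_simps)
    finally show ?case .
  qed
  thus "\<exists>C. eventually (\<lambda>k. cmod (\<beta> k) \<le> C * x ^ k) sequentially"
    using eventually_sequentially_Suc[of "\<lambda>k. cmod (\<beta> k) \<le> 1 / (x * m) * x ^ k"] by blast
qed

lemma norm_poly_minus_eval_fps_le:
  fixes q :: "complex poly" and \<beta> :: "nat \<Rightarrow> complex" and w :: "nat \<Rightarrow> real"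
  assumes rad: "conv_radius \<beta> = \<infinity>" and close: "\<And>k. cmod (\<beta> k - coeff q k) \<le> d / w k"
    and w: "\<And>k. 0 < w k" and d: "0 \<le> d" and S: "summable (\<lambda>k. r ^ k / w k)" and z: "cmod z \<le> r"
  shows "cmod (poly q z - eval_fps (Abs_fps \<beta>) z) \<le> d * (\<Sum>k. r ^ k / w k)"
proof -
  have "(\<lambda>k. coeff q k * z ^ k) sums poly q z"
    unfolding poly_altdef by (rule sums_finite) (auto simp: coeff_eq_0)
  hence sums: "(\<lambda>k. (coeff q k - \<beta> k) * z ^ k) sums (poly q z - eval_fps (Abs_fps \<beta>) z)"
    using sums_diff[OF _ entire_eval_fps_Abs_fps(3)[OF rad, of z]] by (simp add: left_diff_distrib)
  have term_le: "norm ((coeff q k - \<beta> k) * z ^ k) \<le> d * (r ^ k / w k)" for k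
  proof -
    have "norm ((coeff q k - \<beta> k) * z ^ k) \<le> d / w k * r ^ k"
      unfolding norm_mult norm_power norm_minus_commute[of "coeff q k"]
      by (intro mult_mono close power_mono) (use z d w[of k] in auto)
    thus ?thesis by simp
  qed
  have norm_sum: "summable (\<lambda>k. norm ((coeff q k - \<beta> k) * z ^ k))"
    by (rule summable_comparison_test[OF _ summable_mult[OF S]]) (use term_le in auto)
  have "cmod (poly q z - eval_fps (Abs_fps \<beta>) z) = norm (\<Sum>k. (coeff q k - \<beta> k) * z ^ k)"
    using sums_unique[OF sums] by simp
  also have "\<dots> \<le> (\<Sum>k. norm ((coeff q k - \<beta> k) * z ^ k))"
    by (rule summable_norm[OF norm_sum])
  also have "\<dots> \<le> (\<Sum>k. d * (r ^ k / w k))"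
    by (rule suminf_le[OF term_le norm_sum summable_mult[OF S]])
  also have "\<dots> = d * (\<Sum>k. r ^ k / w k)"
    by (rule suminf_mult[OF S])
  finally show ?thesis .
qed

lemma entire_uniform_limit_of_polys:
  fixes p :: "nat \<Rightarrow> complex poly" and w e :: "nat \<Rightarrow> real"
  assumes deg: "\<And>n. degree (p n) \<le> n"
    and w: "\<And>k. 0 < w k" and m: "0 < m" "eventually (\<lambda>k. m ^ k \<le> w k) sequentially"
    and e: "\<And>n. 0 \<le> e n" "superexp_decay e"
    and step: "\<And>n k. cmod (coeff (p (Suc n)) k - coeff (p n) k) * w k \<le> e n"
  shows "\<exists>F. F holomorphic_on UNIV \<and>
           (\<forall>r m'. 0 < r \<and> r < m' \<and> eventually (\<lambda>k. m' ^ k \<le> w k) sequentially \<longrightarrow>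
              uniform_limit (ball 0 r) (\<lambda>n. poly (p n)) F sequentially)"
proof -
  define t where "t = (\<lambda>n. \<Sum>i. e (i + n))"
  have e_sum: "summable e" and t: "superexp_decay t"
    using superexp_decay_tail[OF e] by (simp_all add: t_def)
  have t_nonneg: "0 \<le> t n" for n
    unfolding t_def by (intro suminf_nonneg summable_ignore_initial_segment[OF e_sum] e)
  obtain \<beta> where \<beta>: "\<And>k n. cmod (\<beta> k - coeff (p n) k) \<le> t n / w k"
    using coeff_limits_with_tail_bound[OF w e_sum step] unfolding t_def by blast
  have rad: "conv_radius \<beta> = \<infinity>"
    by (intro conv_radius_eq_inf_if_superexp_decay superexp_decay_limit_coeffs[OF deg \<beta> t_nonneg t w m])
  have "uniform_limit (ball 0 r) (\<lambda>n. poly (p n)) (eval_fps (Abs_fps \<beta>)) sequentially"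
    if r: "0 < r" "r < m'" and m': "eventually (\<lambda>k. m' ^ k \<le> w k) sequentially" for r m'
  proof (rule uniform_limitI)
    fix \<epsilon> :: real assume "0 < \<epsilon>"
    define S where "S = (\<Sum>k. r ^ k / w k)"
    have S: "summable (\<lambda>k. r ^ k / w k)"
      by (rule summable_power_div_if_eventually_power_le[OF w r m'])
    have "(\<lambda>n. t n * S) \<longlonglongrightarrow> 0 * S"
      by (intro tendsto_mult tendsto_const superexp_decay_LIMSEQ_0[OF t_nonneg t])
    with \<open>0 < \<epsilon>\<close> have "eventually (\<lambda>n. t n * S < \<epsilon>) sequentially"
      by (intro order_tendstoD) auto
    thus "eventually (\<lambda>n. \<forall>z\<in>ball 0 r. dist (poly (p n) z) (eval_fps (Abs_fps \<beta>) z) < \<epsilon>) sequentially"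
    proof eventually_elim
      case (elim n)
      show ?case
      proof
        fix z :: complex assume "z \<in> ball 0 r"
        hence "cmod (poly (p n) z - eval_fps (Abs_fps \<beta>) z) \<le> t n * S"
          unfolding S_def by (intro norm_poly_minus_eval_fps_le[OF rad \<beta> w t_nonneg S]) auto
        with elim show "dist (poly (p n) z) (eval_fps (Abs_fps \<beta>) z) < \<epsilon>"
          by (simp add: dist_norm)
      qed
    qed
  qed
  with entire_eval_fps_Abs_fps(1)[OF rad] show ?thesis by blast
qed

section \<open>Admissible function spaces\<close>

locale admissible_fn_space =
  fixes X :: "(complex \<Rightarrow> complex) set" and N :: "(complex \<Rightarrow> complex) \<Rightarrow> real"
  assumes admissible: "admissible_space X N"
begin

lemma vanishes_outside_disk: "f \<in> X \<Longrightarrow> z \<notin> ball 0 1 \<Longrightarrow> f z = 0"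
  using admissible unfolding admissible_space_def by (elim conjE) simp

lemma zero_mem: "(\<lambda>z. 0) \<in> X"
  using admissible unfolding admissible_space_def by (elim conjE)

lemma add_mem: "f \<in> X \<Longrightarrow> g \<in> X \<Longrightarrow> (\<lambda>z. f z + g z) \<in> X"
  using admissible unfolding admissible_space_def by (elim conjE) simp

lemma scale_mem: "f \<in> X \<Longrightarrow> (\<lambda>z. c * f z) \<in> X"
  using admissible unfolding admissible_space_def by (elim conjE) simp

lemma N_eq_0_iff: "f \<in> X \<Longrightarrow> N f = 0 \<longleftrightarrow> f = (\<lambda>z. 0)"
  using admissible unfolding admissible_space_def by (elim conjE) simp

lemma N_triangle: "f \<in> X \<Longrightarrow> g \<in> X \<Longrightarrow> N (\<lambda>z. f z + g z) \<le> N f + N g"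
  using admissible unfolding admissible_space_def by (elim conjE) simp

lemma N_scale: "f \<in> X \<Longrightarrow> N (\<lambda>z. c * f z) = cmod c * N f"
  using admissible unfolding admissible_space_def by (elim conjE) simp

lemma restr_entire_mem: "g holomorphic_on UNIV \<Longrightarrow> restr g \<in> X"
  using admissible unfolding admissible_space_def by (elim conjE) simp

lemma N_circle_conv_le:
  assumes F: "F \<in> X" and \<kappa>: "continuous_on {0..2*pi} \<kappa>"
  shows "N (circle_conv F \<kappa>) \<le> integral {0..2*pi} (\<lambda>t. cmod (\<kappa> t)) / (2*pi) * N F"
proof -
  have "set_integrable lborel {0..2*pi} \<kappa>"
    by (rule borel_integrable_atLeastAtMost'[OF \<kappa>])
  hence "N (circle_conv F \<kappa>) \<le> (1 / (2*pi)) * (LINT t:{0..2*pi}|lborel. cmod (\<kappa> t)) * N F"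
    using admissible F unfolding admissible_space_def circle_conv_def by (elim conjE) simp
  moreover have "(LINT t:{0..2*pi}|lborel. cmod (\<kappa> t)) = integral {0..2*pi} (\<lambda>t. cmod (\<kappa> t))"
    by (intro set_borel_integral_eq_integral(2) borel_integrable_atLeastAtMost' continuous_intros \<kappa>)
  ultimately show ?thesis by simp
qed

lemma diff_mem: "f \<in> X \<Longrightarrow> g \<in> X \<Longrightarrow> (\<lambda>z. f z - g z) \<in> X"
  using add_mem[of f "\<lambda>z. (-1) * g z"] scale_mem[of g "-1"] by simp

lemma N_nonneg: "f \<in> X \<Longrightarrow> 0 \<le> N f"
  using N_triangle[of f "\<lambda>z. (-1) * f z"] N_scale[of f "-1"] scale_mem[of f "-1"]
    N_eq_0_iff[OF zero_mem] by simp

lemma N_diff_le: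
  assumes "f \<in> X" "g \<in> X" "h \<in> X"
  shows "N (\<lambda>z. g z - h z) \<le> N (\<lambda>z. f z - g z) + N (\<lambda>z. f z - h z)"
proof -
  have "N (\<lambda>z. (-1) * (f z - g z) + (f z - h z)) \<le> N (\<lambda>z. (-1) * (f z - g z)) + N (\<lambda>z. f z - h z)"
    using assms by (intro N_triangle scale_mem diff_mem)
  thus ?thesis using N_scale[OF diff_mem[OF assms(1,2)], of "-1"] by simp
qed

lemma restr_poly_mem: "restr (poly q) \<in> X"
  by (rule restr_entire_mem) (auto intro: holomorphic_intros)

lemma N_mono_fn_pos: "0 < N (mono_fn n)"
proof -
  have mem: "mono_fn n \<in> X"
    unfolding mono_fn_def by (rule restr_entire_mem) (auto intro: holomorphic_intros)
  have "mono_fn n (1/2) \<noteq> 0" by (simp add: mono_fn_def restr_def)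
  hence "N (mono_fn n) \<noteq> 0" using N_eq_0_iff[OF mem] by auto
  thus ?thesis using N_nonneg[OF mem] by simp
qed

lemma Taylor_coeff_N_le:
  assumes hol: "h holomorphic_on UNIV"
  shows "cmod ((deriv ^^ k) h 0 / fact k) * N (mono_fn k) \<le> N (restr h)"
proof -
  define c where "c = (deriv ^^ k) h 0 / fact k"
  have \<kappa>: "continuous_on {0..2*pi} (\<lambda>t. cis (- (real k * t)))" by (intro continuous_intros)
  have "circle_conv (restr h) (\<lambda>t. cis (- (real k * t))) = restr (\<lambda>z. 2 * pi * (c * z ^ k) / (2 * pi))"
    by (rule circle_conv_restr[OF hol \<kappa>]) (unfold c_def, rule has_integral_circle_Taylor_coeff[OF hol])
  also have "\<dots> = (\<lambda>z. c * mono_fn k z)"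
    by (auto simp: restr_def mono_fn_def)
  finally have "N (\<lambda>z. c * mono_fn k z) \<le> integral {0..2*pi} (\<lambda>t. cmod (cis (- (real k * t)))) / (2*pi) * N (restr h)"
    using N_circle_conv_le[OF restr_entire_mem[OF hol] \<kappa>] by simp
  moreover have "mono_fn k \<in> X"
    unfolding mono_fn_def by (rule restr_entire_mem) (auto intro: holomorphic_intros)
  ultimately show ?thesis using N_scale[of "mono_fn k" c] by (simp add: c_def)
qed

lemma best_approx_error_le:
  assumes f: "f \<in> X" and q: "degree q < n"
  shows "best_approx_error N n f \<le> N (\<lambda>z. f z - restr (poly q) z)"
  unfolding best_approx_error_def
proof (rule cINF_lower)
  show "bdd_below ((\<lambda>p. N (\<lambda>z. f z - p z)) ` poly_space n)"
    by (rule bdd_belowI[of _ 0]) (auto simp: poly_space_def intro!: N_nonneg diff_mem[OF f] restr_poly_mem)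
  show "restr (poly q) \<in> poly_space n"
    using q by (auto simp: poly_space_def)
qed

lemma best_approx_error_nonneg:
  assumes f: "f \<in> X" and n: "1 \<le> n"
  shows "0 \<le> best_approx_error N n f"
  unfolding best_approx_error_def
proof (rule cINF_greatest)
  show "poly_space n \<noteq> {}"
    using n by (auto simp: poly_space_def intro!: exI[of _ 0])
qed (auto simp: poly_space_def intro!: N_nonneg diff_mem[OF f] restr_poly_mem)

lemma best_approx_error_le_entire:
  fixes g :: "complex \<Rightarrow> complex"
  assumes f: "f \<in> X" and hol: "g holomorphic_on UNIV" and fg: "\<And>z. z \<in> ball 0 1 \<Longrightarrow> f z = g z"
    and \<rho>: "0 < \<rho>" "\<rho> < 1" and n: "1 \<le> n"
  shows "best_approx_error N n f \<le> N (restr (\<lambda>z. g (z / \<rho>))) * \<rho> ^ n / (1 - \<rho>)"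
proof -
  define a where "a = complex_of_real \<rho>"
  have a: "cmod a < 1" "cmod a = \<rho>" using \<rho> by (simp_all add: a_def)
  define \<kappa> where "\<kappa> t = (a * cis (- t)) ^ n * (cis t / (cis t - a))" for t
  define q where "q = (\<Sum>k<n. monom ((deriv ^^ k) g 0 / fact k) k)"
  have "degree q \<le> n - 1"
    unfolding q_def by (rule degree_sum_le) (auto intro: order.trans[OF degree_monom_le])
  hence deg: "degree q < n" using n by simp
  have \<kappa>_cont: "continuous_on {0..2*pi} \<kappa>"
    unfolding \<kappa>_def by (intro continuous_intros) (use a in auto)
  have hol\<rho>: "(\<lambda>z. g (z / \<rho>)) holomorphic_on UNIV"
    using holomorphic_on_compose_scale[OF hol, of "1 / \<rho>"] by (simp add: mult.commute)
  have "circle_conv (restr (\<lambda>z. g (z / \<rho>))) \<kappa>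
          = restr (\<lambda>z. 2 * pi * (g (z / \<rho> * a) - (\<Sum>k<n. (deriv ^^ k) g 0 / fact k * (z / \<rho> * a) ^ k)) / (2 * pi))"
  proof (rule circle_conv_restr[OF hol\<rho> \<kappa>_cont])
    fix z :: complex
    show "((\<lambda>t. g (z * cis t / \<rho>) * \<kappa> t) has_integral
            2 * pi * (g (z / \<rho> * a) - (\<Sum>k<n. (deriv ^^ k) g 0 / fact k * (z / \<rho> * a) ^ k))) {0..2*pi}"
      using has_integral_circle_Taylor_remainder[OF hol a(1), of "z / \<rho>" n]
      by (simp add: \<kappa>_def)
  qed
  also have "\<dots> = (\<lambda>z. f z - restr (poly q) z)"
    using \<rho> vanishes_outside_disk[OF f] fg
    by (auto simp: restr_def a_def q_def poly_sum poly_monom)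
  finally have conv: "circle_conv (restr (\<lambda>z. g (z / \<rho>))) \<kappa> = (\<lambda>z. f z - restr (poly q) z)" .
  have \<kappa>_int: "integral {0..2*pi} (\<lambda>t. cmod (\<kappa> t)) / (2 * pi) \<le> \<rho> ^ n / (1 - \<rho>)"
    unfolding \<kappa>_def a_def by (rule integral_norm_Taylor_kernel_le[OF \<rho>])
  have "best_approx_error N n f \<le> N (\<lambda>z. f z - restr (poly q) z)"
    by (rule best_approx_error_le[OF f deg])
  also have "\<dots> \<le> integral {0..2*pi} (\<lambda>t. cmod (\<kappa> t)) / (2 * pi) * N (restr (\<lambda>z. g (z / \<rho>)))"
    unfolding conv[symmetric] by (rule N_circle_conv_le[OF restr_entire_mem[OF hol\<rho>] \<kappa>_cont])
  also have "\<dots> \<le> \<rho> ^ n / (1 - \<rho>) * N (restr (\<lambda>z. g (z / \<rho>)))"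
    by (rule mult_right_mono[OF \<kappa>_int N_nonneg[OF restr_entire_mem[OF hol\<rho>]]])
  finally show ?thesis by (simp add: mult.commute)
qed

lemma best_approx_error_root_tendsto_0:
  assumes f: "f \<in> X" and ent: "entire_on_disk f"
    and \<mu>: "0 < liminf (\<lambda>n. ereal (N (mono_fn n) powr (1 / real n)))"
  shows "(\<lambda>n. (best_approx_error N n f / N (mono_fn n)) powr (1 / real n)) \<longlonglongrightarrow> 0"
proof -
  obtain g where hol: "g holomorphic_on UNIV" and fg: "\<And>z. z \<in> ball 0 1 \<Longrightarrow> f z = g z"
    using ent unfolding entire_on_disk_def by blast
  obtain m where m: "0 < m" "ereal m < liminf (\<lambda>n. ereal (N (mono_fn n) powr (1 / real n)))"
    using ereal_dense2[OF \<mu>[unfolded zero_ereal_def]] by auto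
  have low: "eventually (\<lambda>n. m ^ n < N (mono_fn n)) sequentially"
    by (rule eventually_power_less_if_less_liminf_root[OF m(2)])
       (use m N_mono_fn_pos in \<open>auto intro: less_imp_le\<close>)
  have decay: "superexp_decay (\<lambda>n. best_approx_error N n f / N (mono_fn n))"
  proof (rule superexp_decayI)
    fix x :: real assume x: "0 < x"
    define \<rho> where "\<rho> = min (1/2) (x * m)"
    have \<rho>: "0 < \<rho>" "\<rho> < 1" "\<rho> / m \<le> x"
      using x m by (auto simp: \<rho>_def pos_divide_le_eq)
    define C where "C = N (restr (\<lambda>z. g (z / \<rho>))) / (1 - \<rho>)"
    have "0 \<le> C"
      unfolding C_def using \<rho> holomorphic_on_compose_scale[OF hol, of "1 / \<rho>"]
      by (auto intro!: divide_nonneg_pos N_nonneg restr_entire_mem simp: mult.commute)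
    have "eventually (\<lambda>n. best_approx_error N n f / N (mono_fn n) \<le> C * x ^ n) sequentially"
      using low eventually_ge_at_top[of 1]
    proof eventually_elim
      case (elim n)
      have E: "best_approx_error N n f \<le> C * \<rho> ^ n"
        using best_approx_error_le_entire[OF f hol fg \<rho>(1,2) elim(2)] by (simp add: C_def)
      have "best_approx_error N n f / N (mono_fn n) \<le> C * \<rho> ^ n / m ^ n"
        by (rule frac_le[OF _ E]) (use \<open>0 \<le> C\<close> \<rho> m elim in auto)
      also have "\<dots> = C * (\<rho> / m) ^ n"
        by (simp add: power_divide)
      also have "\<dots> \<le> C * x ^ n"
        by (intro mult_left_mono power_mono \<rho>(3) \<open>0 \<le> C\<close>) (use \<rho> m in simp)
      finally show ?case .
    qed
    thus "\<exists>C. eventually (\<lambda>n. best_approx_error N n f / N (mono_fn n) \<le> C * x ^ n) sequentially" ..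
  qed
  have "eventually (\<lambda>n. 0 \<le> best_approx_error N n f / N (mono_fn n)) sequentially"
    using eventually_ge_at_top[of 1]
    by eventually_elim (intro divide_nonneg_pos best_approx_error_nonneg[OF f] N_mono_fn_pos)
  with decay show ?thesis
    by (simp add: superexp_decay_iff_root_tendsto_0)
qed

lemma N_mono_fn_le_geometric: "\<exists>B>0. \<forall>n\<ge>1. N (mono_fn n) \<le> B ^ n"
proof (rule geometric_bound_if_entire_coeffs_bounded)
  show "0 < N (mono_fn k)" for k by (rule N_mono_fn_pos)
  fix c :: "nat \<Rightarrow> complex" assume "conv_radius c = \<infinity>"
  note entire = entire_eval_fps_Abs_fps[OF this]
  have "cmod (c k) * N (mono_fn k) \<le> N (restr (eval_fps (Abs_fps c)))" for k
    using Taylor_coeff_N_le[OF entire(1), of k] unfolding entire(2) .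
  thus "\<exists>H. \<forall>k. cmod (c k) * N (mono_fn k) \<le> H" by blast
qed

lemma best_approx_error_superexp_decay:
  assumes f: "f \<in> X"
    and lim: "(\<lambda>n. (best_approx_error N n f / N (mono_fn n)) powr (1 / real n)) \<longlonglongrightarrow> 0"
  shows "superexp_decay (\<lambda>n. best_approx_error N n f)"
  unfolding superexp_decay_def
proof (intro allI impI)
  fix x :: real assume x: "0 < x"
  obtain B where B: "0 < B" "\<And>n. 1 \<le> n \<Longrightarrow> N (mono_fn n) \<le> B ^ n"
    using N_mono_fn_le_geometric by blast
  have "eventually (\<lambda>n. 0 \<le> best_approx_error N n f / N (mono_fn n)) sequentially"
    using eventually_ge_at_top[of 1]
    by eventually_elim (intro divide_nonneg_pos best_approx_error_nonneg[OF f] N_mono_fn_pos)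
  hence "superexp_decay (\<lambda>n. best_approx_error N n f / N (mono_fn n))"
    using lim by (simp add: superexp_decay_iff_root_tendsto_0)
  hence "eventually (\<lambda>n. best_approx_error N n f / N (mono_fn n) \<le> (x / B) ^ n) sequentially"
    using x B(1) by (simp add: superexp_decay_def)
  thus "eventually (\<lambda>n. best_approx_error N n f \<le> x ^ n) sequentially"
    using eventually_ge_at_top[of 1]
  proof eventually_elim
    case (elim n)
    have "best_approx_error N n f \<le> (x / B) ^ n * N (mono_fn n)"
      using elim(1) N_mono_fn_pos[of n] by (simp add: pos_divide_le_eq)
    also have "\<dots> \<le> (x / B) ^ n * B ^ n"
      by (intro mult_left_mono B(2) elim(2)) (use x B in simp)
    also have "\<dots> = x ^ n"
      using B by (simp add: power_divide)
    finally show ?case .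
  qed
qed

lemma coeff_diff_N_le:
  assumes f: "f \<in> X"
  shows "cmod (coeff q k - coeff p k) * N (mono_fn k)
           \<le> N (\<lambda>z. f z - restr (poly q) z) + N (\<lambda>z. f z - restr (poly p) z)"
proof -
  have "poly (q - p) holomorphic_on UNIV"
    by (auto intro: holomorphic_intros)
  hence "cmod (coeff q k - coeff p k) * N (mono_fn k) \<le> N (restr (poly (q - p)))"
    using Taylor_coeff_N_le[of "poly (q - p)" k] by (simp add: higher_deriv_poly_0)
  also have "restr (poly (q - p)) = (\<lambda>z. restr (poly q) z - restr (poly p) z)"
    by (auto simp: restr_def poly_diff)
  also have "N \<dots> \<le> N (\<lambda>z. f z - restr (poly q) z) + N (\<lambda>z. f z - restr (poly p) z)"
    by (rule N_diff_le[OF f restr_poly_mem restr_poly_mem])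
  finally show ?thesis .
qed

lemma best_approx_polys_uniform_limit:
  fixes p :: "nat \<Rightarrow> complex poly"
  assumes f: "f \<in> X"
    and \<mu>: "0 < liminf (\<lambda>n. ereal (N (mono_fn n) powr (1 / real n)))"
    and lim: "(\<lambda>n. (best_approx_error N n f / N (mono_fn n)) powr (1 / real n)) \<longlonglongrightarrow> 0"
    and p: "\<forall>n\<ge>1. degree (p n) < n \<and> N (\<lambda>z. f z - restr (poly (p n)) z) = best_approx_error N n f"
  shows "\<exists>F. F holomorphic_on UNIV \<and>
           (\<forall>r. 0 < r \<and> ereal r < liminf (\<lambda>n. ereal (N (mono_fn n) powr (1 / real n))) \<longrightarrow>
              uniform_limit (ball 0 r) (\<lambda>n. poly (p n)) F sequentially)"
proof -
  define \<mu>' where "\<mu>' = liminf (\<lambda>n. ereal (N (mono_fn n) powr (1 / real n)))"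
  define q where "q = (\<lambda>n. p (Suc n))"
  have deg: "degree (q n) \<le> n" for n
    using p unfolding q_def by (metis le_add1 plus_1_eq_Suc less_Suc_eq_le)
  have step: "cmod (coeff (q (Suc n)) k - coeff (q n) k) * N (mono_fn k)
                \<le> best_approx_error N (Suc n) f + best_approx_error N (Suc (Suc n)) f" for n k
    using coeff_diff_N_le[OF f, of "q (Suc n)" k "q n"] p by (simp add: q_def add.commute)
  have low: "eventually (\<lambda>k. m ^ k \<le> N (mono_fn k)) sequentially" if "ereal m < \<mu>'" "0 \<le> m" for m
    using eventually_power_less_if_less_liminf_root[OF that(1)[unfolded \<mu>'_def] that(2)]
    by (auto simp: less_imp_le N_mono_fn_pos elim: eventually_mono)
  obtain m where m: "0 < m" "ereal m < \<mu>'"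
    using ereal_dense2[OF \<mu>[unfolded zero_ereal_def]] by (auto simp: \<mu>'_def)
  obtain F where F: "F holomorphic_on UNIV"
    and unif: "\<And>r m'. 0 < r \<Longrightarrow> r < m' \<Longrightarrow> eventually (\<lambda>k. m' ^ k \<le> N (mono_fn k)) sequentially \<Longrightarrow>
                 uniform_limit (ball 0 r) (\<lambda>n. poly (q n)) F sequentially"
    using entire_uniform_limit_of_polys[OF deg N_mono_fn_pos m(1) low[OF m(2)] _
            superexp_decay_shift_sum[OF best_approx_error_superexp_decay[OF f lim]] step]
          best_approx_error_nonneg[OF f] by (auto simp: less_imp_le[OF m(1)])
  have "uniform_limit (ball 0 r) (\<lambda>n. poly (p n)) F sequentially" if r: "0 < r" "ereal r < \<mu>'" for r
  proof -
    obtain m' where m': "ereal r < ereal m'" "ereal m' < \<mu>'"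
      using ereal_dense2[OF r(2)] by blast
    hence "uniform_limit (ball 0 r) (\<lambda>n. poly (q n)) F sequentially"
      using r by (intro unif low) auto
    thus ?thesis
      unfolding q_def by (rule filterlim_sequentially_Suc[of "\<lambda>n. poly (p n)", THEN iffD1])
  qed
  with F show ?thesis unfolding \<mu>'_def by blast
qed

end

theorem theorem4p1:
  fixes X :: "(complex \<Rightarrow> complex) set" and N :: "(complex \<Rightarrow> complex) \<Rightarrow> real"
    and f :: "complex \<Rightarrow> complex"
  assumes "admissible_space X N"
    and "f \<in> X"
    and mu1: "liminf (\<lambda>n. ereal (N (mono_fn n) powr (1 / real n))) > 0"
  shows "(entire_on_disk f \<longrightarrow>
           (\<lambda>n. (best_approx_error N n f / N (mono_fn n)) powr (1 / real n)) \<longlonglongrightarrow> 0) \<and>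
         ((\<lambda>n. (best_approx_error N n f / N (mono_fn n)) powr (1 / real n)) \<longlonglongrightarrow> 0 \<longrightarrow>
           (\<forall>p :: nat \<Rightarrow> complex poly.
              (\<forall>n\<ge>1. degree (p n) < n \<and>
                 N (\<lambda>z. f z - restr (poly (p n)) z) = best_approx_error N n f) \<longrightarrow>
              (\<exists>F. F holomorphic_on UNIV \<and>
                 (\<forall>r. 0 < r \<and> ereal r < liminf (\<lambda>n. ereal (N (mono_fn n) powr (1 / real n))) \<longrightarrow>
                      uniform_limit (ball 0 r) (\<lambda>n. poly (p n)) F sequentially))))"
proof -
  interpret admissible_fn_space X N
    by (rule admissible_fn_space.intro) (fact assms(1))
  show ?thesis
    using best_approx_error_root_tendsto_0[OF assms(2) _ mu1]
      best_approx_polys_uniform_limit[OF assms(2) mu1] by blast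
qed

end
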